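(* Let $q$ be a nonzero real number with $q\neq-1$, and for $k\ge0$ let $$A_k=\begin{pmatrix} x & q^k(x^2+s)\\ 1 & q^kx\end{pmatrix}.$$ Then for every $n\ge1$, $$\begin{pmatrix} T_n(x,s,q) & (x^2+s)U_{n-1}(x,qs,q)\\ U_{n-1}(x,s,q) & T_n\!\left(x,\frac{s}{q},q\right)\end{pmatrix}=A_{n-1}A_{n-2}\cdots A_0.$$
   Context: $T_0=1$, $T_1=x$, $T_n(x,s,q)=(1+q^{n-1})x\,T_{n-1}(x,s,q)+q^{n-1}s\,T_{n-2}(x,s,q)$ for $n\ge2$; $U_{-1}=0$, $U_0=1$, $U_n(x,s,q)=(1+q^{n})x\,U_{n-1}(x,s,q)+q^{n-1}s\,U_{n-2}(x,s,q)$ for $n\ge1$. *)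

theory Defs
  imports "HOL-Analysis.Analysis"
begin

fun T :: "nat \<Rightarrow> real \<Rightarrow> real \<Rightarrow> real \<Rightarrow> real" where
  "T 0 x s q = 1"
| "T (Suc 0) x s q = x"
| "T (Suc (Suc n)) x s q =
     (1 + q ^ (Suc n)) * x * T (Suc n) x s q + q ^ (Suc n) * s * T n x s q"

text \<open>U n for n \<ge> 0 (with U (-1) = 0 built into the n = 1 case).\<close>
fun U :: "nat \<Rightarrow> real \<Rightarrow> real \<Rightarrow> real \<Rightarrow> real" where
  "U 0 x s q = 1"
| "U (Suc 0) x s q = (1 + q) * x"
| "U (Suc (Suc n)) x s q =
     (1 + q ^ (Suc (Suc n))) * x * U (Suc n) x s q + q ^ (Suc n) * s * U n x s q"

definition mat2 :: "real \<Rightarrow> real \<Rightarrow> real \<Rightarrow> real \<Rightarrow> real^2^2" where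
  "mat2 a b c d = vector [vector [a, b], vector [c, d]]"

definition Amat :: "real \<Rightarrow> real \<Rightarrow> real \<Rightarrow> nat \<Rightarrow> real^2^2" where
  "Amat x s q k = mat2 x (q ^ k * (x\<^sup>2 + s)) 1 (q ^ k * x)"

fun Aprod :: "real \<Rightarrow> real \<Rightarrow> real \<Rightarrow> nat \<Rightarrow> real^2^2" where
  "Aprod x s q 0 = mat 1"
| "Aprod x s q (Suc n) = Amat x s q n ** Aprod x s q n"

end

theory Submission
  imports Defs
begin

text \<open>
  The product formula amounts to four first-order recurrences for the entries, obtained by
  multiplying by \<open>A\<^sub>n\<close> on the left. They come in two pairs of mixed recurrences
  between \<open>T\<close> and \<open>U\<close>, each pair proved jointly by induction from the defining
  three-term recurrences; the second pair relates \<open>T\<close> with parameter \<open>t\<close> to \<open>U\<close> with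
  parameter \<open>q\<^sup>2 t\<close>, which for \<open>t = s/q\<close> gives the right column.
\<close>

lemma mat2_mult_mat2:
  "mat2 a b c d ** mat2 e f g h = mat2 (a*e + b*g) (a*f + b*h) (c*e + d*g) (c*f + d*h)"
  unfolding mat2_def
  by (simp add: vec_eq_iff forall_2 matrix_matrix_mult_def sum_2 vector_2)

lemma mat_1_eq_mat2: "mat 1 = mat2 1 0 0 1"
  unfolding mat2_def by (simp add: vec_eq_iff forall_2 mat_def vector_2)

lemma T_U_mixed_recurrence:
  "U (Suc n) x s q = T (Suc n) x s q + q ^ Suc n * x * U n x s q \<and>
   T (Suc (Suc n)) x s q = x * U (Suc n) x s q + q ^ Suc n * s * U n x s q"
proof (induction n)
  case 0
  show ?case by (simp add: algebra_simps)
next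
  case (Suc n)
  have "U (Suc (Suc n)) x s q
          = (1 + q ^ Suc (Suc n)) * x * U (Suc n) x s q + q ^ Suc n * s * U n x s q"
       "T (Suc (Suc (Suc n))) x s q
          = (1 + q ^ Suc (Suc n)) * x * T (Suc (Suc n)) x s q + q ^ Suc (Suc n) * s * T (Suc n) x s q"
    by simp_all
  with Suc show ?case
    by (simp del: T.simps U.simps add: algebra_simps)
qed

lemma T_U_mixed_recurrence_shifted:
  "U (Suc n) x (q\<^sup>2 * t) q = x * U n x (q\<^sup>2 * t) q + q ^ Suc n * T (Suc n) x t q \<and>
   T (Suc (Suc n)) x t q = (x\<^sup>2 + q * t) * U n x (q\<^sup>2 * t) q + q ^ Suc n * x * T (Suc n) x t q"
proof (induction n)
  case 0
  show ?case by (simp add: algebra_simps power2_eq_square)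
next
  case (Suc n)
  have "U (Suc (Suc n)) x (q\<^sup>2 * t) q
          = (1 + q ^ Suc (Suc n)) * x * U (Suc n) x (q\<^sup>2 * t) q + q ^ Suc n * (q\<^sup>2 * t) * U n x (q\<^sup>2 * t) q"
       "T (Suc (Suc (Suc n))) x t q
          = (1 + q ^ Suc (Suc n)) * x * T (Suc (Suc n)) x t q + q ^ Suc (Suc n) * t * T (Suc n) x t q"
    by simp_all
  with Suc show ?case
    by (simp del: T.simps U.simps add: algebra_simps power2_eq_square)
qed

theorem theorem2p9:
  fixes q x s :: real and n :: nat
  assumes "q \<noteq> 0" and "q \<noteq> -1" and "n \<ge> 1"
  shows "mat2 (T n x s q) ((x\<^sup>2 + s) * U (n - 1) x (q * s) q)
              (U (n - 1) x s q) (T n x (s / q) q)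
         = Aprod x s q n"
  using assms(3)
proof (induction n rule: dec_induct)
  case base
  show ?case by (simp add: Amat_def mat_1_eq_mat2 mat2_mult_mat2)
next
  case (step n)
  then obtain m where n: "n = Suc m" by (cases n) auto
  have "q\<^sup>2 * (s / q) = q * s" "q * (s / q) = s"
    using assms(1) by (simp_all add: power2_eq_square)
  then have shifted:
    "U n x (q * s) q = x * U m x (q * s) q + q ^ n * T n x (s / q) q"
    "T (Suc n) x (s / q) q = (x\<^sup>2 + s) * U m x (q * s) q + q ^ n * x * T n x (s / q) q"
    using T_U_mixed_recurrence_shifted[of m x q "s / q"] n by auto
  have "Aprod x s q (Suc n)
          = Amat x s q n ** mat2 (T n x s q) ((x\<^sup>2 + s) * U m x (q * s) q)
                                 (U m x s q) (T n x (s / q) q)"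
    using step.IH n by simp
  also have "\<dots> = mat2 (T (Suc n) x s q) ((x\<^sup>2 + s) * U n x (q * s) q)
                       (U n x s q) (T (Suc n) x (s / q) q)"
    using T_U_mixed_recurrence[of m x s q] shifted n
    unfolding Amat_def mat2_mult_mat2
    by (simp del: T.simps U.simps add: algebra_simps power2_eq_square)
  finally show ?case by simp
qed

end
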